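(* Let $G$ be a connected bipartite graph with bipartition $(U,V)$, $|U|\ge |V|$. Let $V_W\subseteq V$ be the set of vertices of $V$ adjacent to at least one leaf of $G$, $\overline{V_W}=V\setminus V_W$, let $U_L\subseteq U$ be a set of leaves such that each $v\in V_W$ is adjacent to exactly one element of $U_L$ and $|U_L|=|V_W|$, and $\overline{U_L}=U\setminus U_L$. Let $X=\{S\subseteq \overline{U_L} : S\neq\emptyset,\ N(S)=\overline{V_W}\}$ and $q=|\{S\in X: |S| \text{ even}\}|-|\{S\in X : |S|\text{ odd}\}|$. Then: (a) if $\overline{V_W}=\emptyset$, then $\deg h_{R/I(G)}(t)=\alpha(G)$; (b) if $\overline{V_W}\neq\emptyset$, then $\deg h_{R/I(G)}(t)=\alpha(G)$ if and only if $q\neq 0$.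
   Context: $N(S)$ denotes the set of all vertices adjacent to some vertex of $S$. A leaf is a vertex with exactly one neighbor. $\alpha(G)$ is the maximum size of an independent set of $G$ (a set of vertices no two of which are adjacent). For a finite simple graph $G$ on vertices $x_1,\dots,x_n$, $R=k[x_1,\dots,x_n]$ over a field $k$, $I(G)=(x_ix_j:\{x_i,x_j\}\in E(G))$, and $h_{R/I(G)}(t)$ is the $h$-polynomial: the numerator of the Hilbert series $\sum_i \dim_k(R/I(G))_i t^i$ written as a reduced fraction $h_{R/I(G)}(t)/(1-t)^{\dim R/I(G)}$. *)

theory Defs
  imports Main "HOL-Computational_Algebra.Polynomial_FPS"
begin

definition simple_graph :: "'a set \<Rightarrow> 'a set set \<Rightarrow> bool" where
  "simple_graph Vs E \<longleftrightarrow> finite Vs \<and> (\<forall>e\<in>E. e \<subseteq> Vs \<and> card e = 2)"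

definition adj :: "'a set set \<Rightarrow> 'a \<Rightarrow> 'a \<Rightarrow> bool" where
  "adj E x y \<longleftrightarrow> {x, y} \<in> E"

definition connected_graph :: "'a set \<Rightarrow> 'a set set \<Rightarrow> bool" where
  "connected_graph Vs E \<longleftrightarrow> (\<forall>x\<in>Vs. \<forall>y\<in>Vs. (adj E)\<^sup>*\<^sup>* x y)"

definition bipartition :: "'a set \<Rightarrow> 'a set set \<Rightarrow> 'a set \<Rightarrow> 'a set \<Rightarrow> bool" where
  "bipartition Vs E U V \<longleftrightarrow> U \<noteq> {} \<and> V \<noteq> {} \<and> U \<inter> V = {} \<and> U \<union> V = Vs \<and>
     (\<forall>e\<in>E. \<exists>u\<in>U. \<exists>v\<in>V. e = {u, v})"

definition nbhd :: "'a set set \<Rightarrow> 'a set \<Rightarrow> 'a set" where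
  "nbhd E S = {y. \<exists>x\<in>S. adj E x y}"

definition leaf :: "'a set \<Rightarrow> 'a set set \<Rightarrow> 'a \<Rightarrow> bool" where
  "leaf Vs E x \<longleftrightarrow> x \<in> Vs \<and> card {y. adj E x y} = 1"

definition independent :: "'a set set \<Rightarrow> 'a set \<Rightarrow> bool" where
  "independent E S \<longleftrightarrow> (\<forall>x\<in>S. \<forall>y\<in>S. \<not> adj E x y)"

definition alpha :: "'a set \<Rightarrow> 'a set set \<Rightarrow> nat" where
  "alpha Vs E = Max {card S | S. S \<subseteq> Vs \<and> independent E S}"

(* Hilbert function of R/I(G), R = k[x_v : v in Vs]: dim_k (R/I(G))_i equals the number of
   degree-i monomials (exponent vectors m supported on Vs) not in the monomial ideal I(G),
   i.e. not divisible by any edge monomial x_u x_v.  (Independent of the field k.) *)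
definition hilbert_fun :: "'a set \<Rightarrow> 'a set set \<Rightarrow> nat \<Rightarrow> nat" where
  "hilbert_fun Vs E i = card {m :: 'a \<Rightarrow> nat. (\<forall>x. x \<notin> Vs \<longrightarrow> m x = 0) \<and>
       (\<Sum>x\<in>Vs. m x) = i \<and> (\<forall>e\<in>E. \<not> (\<forall>x\<in>e. 0 < m x))}"

definition hilbert_series :: "'a set \<Rightarrow> 'a set set \<Rightarrow> int fps" where
  "hilbert_series Vs E = Abs_fps (\<lambda>i. int (hilbert_fun Vs E i))"

(* h-polynomial: numerator h of HS(t) = h(t)/(1-t)^d written as a reduced fraction (h(1) \<noteq> 0) *)
definition h_poly :: "'a set \<Rightarrow> 'a set set \<Rightarrow> int poly" where
  "h_poly Vs E = (THE h. \<exists>d::nat. fps_of_poly h = hilbert_series Vs E * (1 - fps_X) ^ d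
                               \<and> poly h 1 \<noteq> 0)"

end

theory Submission
  imports Defs "HOL-Library.Multiset"
begin

(* The monomials outside I(G) are those whose support is an independent set T, and those with
   support exactly T have generating function (t/(1-t))^|T|. Hence
   h(t) = sum_T t^|T| (1-t)^(alpha - |T|): its value at 1 counts the maximum independent sets, so
   the fraction is reduced, and its coefficient of t^alpha is (-1)^alpha sum_T (-1)^|T|.
   In this alternating sum, group the independent sets T by T - Y for an independent set Y; the
   contributions of the parts inside Y cancel unless Y is contained in N(T - Y). For Y = U_L this
   forces the stems V_W into T and leaves the independent sets of the graph induced on
   (U - N(V_W)) union (V - V_W); for Y = V - V_W it then leaves the sets S of U - N(V_W) whose
   neighbourhood covers V - V_W. These are exactly the sets in X, except that when V_W = V
   connectivity gives U = N(V_W), and only the empty set remains. *)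

unbundle fps_syntax

section \<open>Alternating sums over independent sets\<close>

lemma sum_Pow_neg_one_power:
  assumes "finite A"
  shows "(\<Sum>B\<in>Pow A. (-1::int) ^ card B) = (if A = {} then 1 else 0)"
proof (cases "A = {}")
  case False
  then have "card {B \<in> Pow A. even (card B)} = card {B \<in> Pow A. odd (card B)}"
    using card_subsupersets_even_odd[OF assms, of "{}"] by auto
  then show ?thesis
    using False assms by (simp add: sum_alternating_cancels)
qed simp

lemma sum_neg_one_power_card:
  assumes "finite F"
  shows "(\<Sum>S\<in>F. (-1::int) ^ card S)
       = int (card {S\<in>F. even (card S)}) - int (card {S\<in>F. odd (card S)})"
proof -
  have "(\<Sum>S\<in>F. (-1::int) ^ card S) = (\<Sum>S\<in>F. if even (card S) then 1 else -1)"
    by (intro sum.cong) auto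
  also have "\<dots> = int (card {S\<in>F. even (card S)}) - int (card {S\<in>F. odd (card S)})"
    using assms by (simp add: sum.If_cases Int_def)
  finally show ?thesis .
qed

lemma sum_neg_one_power_UN_Pow:
  fixes F :: "'a set set" and Z :: "'a set \<Rightarrow> 'a set"
  assumes "finite F" and "finite Y"
    and fin: "\<And>T. T \<in> F \<Longrightarrow> finite T" and disj: "\<And>T. T \<in> F \<Longrightarrow> T \<inter> Y = {}"
    and Z: "\<And>T. T \<in> F \<Longrightarrow> Z T \<subseteq> Y"
  shows "(\<Sum>T\<in>(\<Union>T0\<in>F. (\<union>) T0 ` Pow (Z T0)). (-1::int) ^ card T)
       = (\<Sum>T\<in>{T\<in>F. Z T = {}}. (-1) ^ card T)"
proof -
  have finZ: "finite (Z T)" if "T \<in> F" for T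
    using Z[OF that] \<open>finite Y\<close> by (rule finite_subset)
  have pieces_disjoint: "(\<union>) T0 ` Pow (Z T0) \<inter> (\<union>) T1 ` Pow (Z T1) = {}"
    if "T0 \<in> F" "T1 \<in> F" "T0 \<noteq> T1" for T0 T1
    using that disj Z by blast
  have piece_sum: "(\<Sum>T\<in>(\<union>) T0 ` Pow (Z T0). (-1::int) ^ card T)
      = (if Z T0 = {} then (-1) ^ card T0 else 0)" if "T0 \<in> F" for T0
  proof -
    have "inj_on ((\<union>) T0) (Pow (Z T0))"
      using disj[OF that] Z[OF that] unfolding inj_on_def by blast
    then have "(\<Sum>T\<in>(\<union>) T0 ` Pow (Z T0). (-1::int) ^ card T)
        = (\<Sum>L\<in>Pow (Z T0). (-1) ^ card (T0 \<union> L))"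
      by (simp add: sum.reindex)
    also have "\<dots> = (-1) ^ card T0 * (\<Sum>L\<in>Pow (Z T0). (-1) ^ card L)"
      unfolding sum_distrib_left
    proof (intro sum.cong refl)
      fix L assume "L \<in> Pow (Z T0)"
      then have "finite L" "T0 \<inter> L = {}"
        using finZ[OF that] finite_subset disj[OF that] Z[OF that] by auto
      then show "(-1::int) ^ card (T0 \<union> L) = (-1) ^ card T0 * (-1) ^ card L"
        using fin[OF that] by (simp add: card_Un_disjoint power_add)
    qed
    finally show ?thesis
      using finZ[OF that] by (simp add: sum_Pow_neg_one_power)
  qed
  have "(\<Sum>T\<in>(\<Union>T0\<in>F. (\<union>) T0 ` Pow (Z T0)). (-1::int) ^ card T)
      = (\<Sum>T0\<in>F. \<Sum>T\<in>(\<union>) T0 ` Pow (Z T0). (-1) ^ card T)"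
    using \<open>finite F\<close> finZ pieces_disjoint by (intro sum.UNION_disjoint) auto
  also have "\<dots> = (\<Sum>T0\<in>F. if Z T0 = {} then (-1) ^ card T0 else 0)"
    using piece_sum by simp
  also have "\<dots> = (\<Sum>T\<in>{T\<in>F. Z T = {}}. (-1) ^ card T)"
    using \<open>finite F\<close> by (simp add: sum.inter_filter)
  finally show ?thesis .
qed

definition independent_sets :: "'a set \<Rightarrow> 'a set set \<Rightarrow> 'a set set" where
  "independent_sets Vs E = {T. T \<subseteq> Vs \<and> independent E T}"

lemma adj_sym: "adj E x y \<Longrightarrow> adj E y x"
  unfolding adj_def by (simp add: insert_commute)

lemma independent_subset: "A \<subseteq> B \<Longrightarrow> independent E B \<Longrightarrow> independent E A"
  unfolding independent_def by blast

lemma independent_Un_iff: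
  "independent E (A \<union> B) \<longleftrightarrow> independent E A \<and> independent E B \<and> B \<inter> nbhd E A = {}"
  unfolding independent_def nbhd_def by (blast dest: adj_sym)

lemma finite_independent_sets: "finite Vs \<Longrightarrow> finite (independent_sets Vs E)"
  unfolding independent_sets_def by (rule finite_subset[of _ "Pow Vs"]) auto

lemma alpha_eq_Max: "alpha Vs E = Max (card ` independent_sets Vs E)"
  unfolding alpha_def independent_sets_def by (rule arg_cong[where f = Max]) blast

lemma card_le_alpha:
  "finite Vs \<Longrightarrow> T \<in> independent_sets Vs E \<Longrightarrow> card T \<le> alpha Vs E"
  unfolding alpha_eq_Max by (simp add: finite_independent_sets)

lemma alpha_attained:
  assumes "finite Vs"
  shows "\<exists>T\<in>independent_sets Vs E. card T = alpha Vs E"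
proof -
  have "{} \<in> independent_sets Vs E"
    unfolding independent_sets_def independent_def by simp
  then show ?thesis
    unfolding alpha_eq_Max using finite_independent_sets[OF assms]
    by (metis (mono_tags, lifting) Max_in empty_iff finite_imageI image_iff)
qed

lemma independent_sets_eq_UN_Pow:
  assumes "Y \<subseteq> Vs" and "independent E Y"
  shows "independent_sets Vs E
       = (\<Union>T0\<in>{T0\<in>independent_sets Vs E. T0 \<inter> Y = {}}. (\<union>) T0 ` Pow (Y - nbhd E T0))"
proof (intro equalityI subsetI)
  fix T assume "T \<in> independent_sets Vs E"
  then have "T \<subseteq> Vs" and "independent E ((T - Y) \<union> (T \<inter> Y))"
    unfolding independent_sets_def by (auto simp: Un_Diff_Int)
  then have "T - Y \<in> {T0\<in>independent_sets Vs E. T0 \<inter> Y = {}}"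
    and "T \<inter> Y \<in> Pow (Y - nbhd E (T - Y))"
    unfolding independent_Un_iff independent_sets_def by auto
  moreover have "T = (T - Y) \<union> (T \<inter> Y)" by blast
  ultimately show "T \<in> (\<Union>T0\<in>{T0\<in>independent_sets Vs E. T0 \<inter> Y = {}}. (\<union>) T0 ` Pow (Y - nbhd E T0))"
    by blast
next
  fix T assume "T \<in> (\<Union>T0\<in>{T0\<in>independent_sets Vs E. T0 \<inter> Y = {}}. (\<union>) T0 ` Pow (Y - nbhd E T0))"
  then obtain T0 L where T0: "T0 \<subseteq> Vs" "independent E T0" and L: "L \<subseteq> Y - nbhd E T0"
    and T: "T = T0 \<union> L"
    unfolding independent_sets_def by blast
  have "independent E L"
    using L assms(2) by (meson Diff_subset independent_subset subset_trans)
  then show "T \<in> independent_sets Vs E"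
    using T0 L assms(1) by (auto simp: independent_sets_def independent_Un_iff T)
qed

text \<open>Group T by T0 = T - Y: the sets T0 union L, for L a subset of Y - N(T0), cancel
  unless Y - N(T0) is empty.\<close>

lemma sum_independent_sets_sieve:
  assumes "finite Vs" and "Y \<subseteq> Vs" and "independent E Y"
  shows "(\<Sum>T\<in>independent_sets Vs E. (-1::int) ^ card T)
       = (\<Sum>T\<in>{T\<in>independent_sets Vs E. T \<inter> Y = {} \<and> Y \<subseteq> nbhd E T}. (-1) ^ card T)"
proof -
  let ?F = "{T0\<in>independent_sets Vs E. T0 \<inter> Y = {}}"
  have "finite ?F" using finite_independent_sets[OF assms(1)] by simp
  moreover have "finite Y" using assms(1,2) by (rule finite_subset[rotated])
  moreover have "finite T" if "T \<in> ?F" for T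
    using that assms(1) finite_subset unfolding independent_sets_def by blast
  ultimately have "(\<Sum>T\<in>(\<Union>T0\<in>?F. (\<union>) T0 ` Pow (Y - nbhd E T0)). (-1::int) ^ card T)
      = (\<Sum>T\<in>{T\<in>?F. Y - nbhd E T = {}}. (-1) ^ card T)"
    by (intro sum_neg_one_power_UN_Pow) auto
  then have "(\<Sum>T\<in>independent_sets Vs E. (-1::int) ^ card T)
      = (\<Sum>T\<in>{T\<in>?F. Y - nbhd E T = {}}. (-1) ^ card T)"
    by (simp only: independent_sets_eq_UN_Pow[OF assms(2,3), symmetric])
  also have "{T\<in>?F. Y - nbhd E T = {}}
      = {T\<in>independent_sets Vs E. T \<inter> Y = {} \<and> Y \<subseteq> nbhd E T}"
    by blast
  finally show ?thesis .
qed

lemma independent_sets_containing: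
  assumes "P \<subseteq> Vs" and "independent E P"
  shows "{T\<in>independent_sets Vs E. P \<subseteq> T} = (\<union>) P ` independent_sets (Vs - P - nbhd E P) E"
proof (intro equalityI subsetI)
  fix T assume T: "T \<in> {T\<in>independent_sets Vs E. P \<subseteq> T}"
  then have "T = P \<union> (T - P)" by blast
  with T have "independent E (P \<union> (T - P))" and "T \<subseteq> Vs"
    unfolding independent_sets_def by auto
  then have "T - P \<in> independent_sets (Vs - P - nbhd E P) E"
    unfolding independent_Un_iff independent_sets_def by blast
  with \<open>T = P \<union> (T - P)\<close> show "T \<in> (\<union>) P ` independent_sets (Vs - P - nbhd E P) E"
    by blast
next
  fix T assume "T \<in> (\<union>) P ` independent_sets (Vs - P - nbhd E P) E"
  then obtain T1 where "T1 \<subseteq> Vs - P - nbhd E P" "independent E T1" "T = P \<union> T1"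
    unfolding independent_sets_def by blast
  then show "T \<in> {T\<in>independent_sets Vs E. P \<subseteq> T}"
    using assms by (auto simp: independent_sets_def independent_Un_iff)
qed

lemma sum_independent_sets_containing:
  assumes "finite Vs" and "P \<subseteq> Vs" and "independent E P"
  shows "(\<Sum>T\<in>{T\<in>independent_sets Vs E. P \<subseteq> T}. (-1::int) ^ card T)
       = (-1) ^ card P * (\<Sum>T\<in>independent_sets (Vs - P - nbhd E P) E. (-1) ^ card T)"
proof -
  let ?I = "independent_sets (Vs - P - nbhd E P) E"
  have "finite P" using assms(1,2) by (rule finite_subset[rotated])
  have disjoint: "P \<inter> T = {}" and finite: "finite T" if "T \<in> ?I" for T
    using that assms(1) finite_subset unfolding independent_sets_def by auto
  have "inj_on ((\<union>) P) ?I"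
    using disjoint unfolding inj_on_def by blast
  then have "(\<Sum>T\<in>{T\<in>independent_sets Vs E. P \<subseteq> T}. (-1::int) ^ card T)
      = (\<Sum>T\<in>?I. (-1) ^ card (P \<union> T))"
    unfolding independent_sets_containing[OF assms(2,3)] by (simp add: sum.reindex)
  also have "\<dots> = (\<Sum>T\<in>?I. (-1) ^ card P * (-1) ^ card T)"
    using disjoint finite \<open>finite P\<close> by (intro sum.cong) (simp_all add: card_Un_disjoint power_add)
  finally show ?thesis by (simp add: sum_distrib_left)
qed

lemma leaf_neighbour:
  assumes "leaf Vs E u"
  obtains w where "{y. adj E u y} = {w}"
  using assms card_1_singletonE unfolding leaf_def by blast

lemma leaves_subset_nbhd_iff:
  assumes "\<forall>u\<in>L. leaf Vs E u"
  shows "L \<subseteq> nbhd E T \<longleftrightarrow> nbhd E L \<subseteq> T"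
proof
  assume L: "L \<subseteq> nbhd E T"
  show "nbhd E L \<subseteq> T"
  proof
    fix p assume "p \<in> nbhd E L"
    then obtain u where "u \<in> L" and "adj E u p" unfolding nbhd_def by blast
    then obtain x where "x \<in> T" and "adj E x u" using L unfolding nbhd_def by blast
    obtain w where w: "{y. adj E u y} = {w}"
      using assms \<open>u \<in> L\<close> leaf_neighbour by metis
    have "p \<in> {y. adj E u y}" and "x \<in> {y. adj E u y}"
      using \<open>adj E u p\<close> \<open>adj E x u\<close> adj_sym by auto
    then have "p = x" unfolding w by simp
    with \<open>x \<in> T\<close> show "p \<in> T" by simp
  qed
next
  assume stems: "nbhd E L \<subseteq> T"
  show "L \<subseteq> nbhd E T"
  proof
    fix u assume "u \<in> L"
    then obtain w where "{y. adj E u y} = {w}"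
      using assms leaf_neighbour by metis
    then have "adj E w u" by (blast intro: adj_sym)
    moreover have "w \<in> T"
      using stems \<open>u \<in> L\<close> \<open>{y. adj E u y} = {w}\<close> unfolding nbhd_def by blast
    ultimately show "u \<in> nbhd E T" unfolding nbhd_def by blast
  qed
qed

lemma sum_independent_sets_remove_leaves:
  assumes "finite Vs" and "L \<subseteq> Vs" and "independent E L" and leaves: "\<forall>u\<in>L. leaf Vs E u"
    and "nbhd E L \<subseteq> Vs" and "independent E (nbhd E L)"
  shows "(\<Sum>T\<in>independent_sets Vs E. (-1::int) ^ card T)
       = (-1) ^ card (nbhd E L)
         * (\<Sum>T\<in>independent_sets (Vs - nbhd E L - nbhd E (nbhd E L)) E. (-1) ^ card T)"
proof -
  have "T \<inter> L = {}" if "independent E T" "nbhd E L \<subseteq> T" for T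
  proof -
    have "L \<subseteq> nbhd E (nbhd E L)"
      using leaves_subset_nbhd_iff[OF leaves] by blast
    then show ?thesis using that unfolding independent_def nbhd_def by blast
  qed
  then have "{T\<in>independent_sets Vs E. T \<inter> L = {} \<and> L \<subseteq> nbhd E T}
      = {T\<in>independent_sets Vs E. nbhd E L \<subseteq> T}"
    using leaves_subset_nbhd_iff[OF leaves] unfolding independent_sets_def by blast
  then show ?thesis
    using sum_independent_sets_sieve[OF assms(1-3)] sum_independent_sets_containing[OF assms(1,5,6)]
    by simp
qed

lemma sum_independent_sets_two_sides:
  assumes "finite A" and "finite B" and "independent E A" and "independent E B"
  shows "(\<Sum>T\<in>independent_sets (A \<union> B) E. (-1::int) ^ card T)
       = (\<Sum>S\<in>{S. S \<subseteq> A \<and> B \<subseteq> nbhd E S}. (-1) ^ card S)"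
proof -
  have "{T\<in>independent_sets (A \<union> B) E. T \<inter> B = {} \<and> B \<subseteq> nbhd E T}
      = {S. S \<subseteq> A \<and> B \<subseteq> nbhd E S}"
  proof (intro equalityI subsetI)
    fix S assume "S \<in> {S. S \<subseteq> A \<and> B \<subseteq> nbhd E S}"
    then have S: "S \<subseteq> A" "B \<subseteq> nbhd E S" by auto
    have "S \<inter> B = {}"
    proof (rule ccontr)
      assume "S \<inter> B \<noteq> {}"
      then obtain x s where "x \<in> S" "s \<in> S" "adj E s x"
        using S(2) unfolding nbhd_def by blast
      then show False using S(1) assms(3) unfolding independent_def by blast
    qed
    moreover have "independent E S" using S(1) assms(3) by (rule independent_subset)
    ultimately show "S \<in> {T\<in>independent_sets (A \<union> B) E. T \<inter> B = {} \<and> B \<subseteq> nbhd E T}"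
      using S unfolding independent_sets_def by blast
  qed (auto simp: independent_sets_def)
  then show ?thesis
    using sum_independent_sets_sieve[of "A \<union> B" B E] assms by simp
qed

section \<open>The Hilbert series of an edge ideal\<close>

definition monomials_with_support :: "'a set \<Rightarrow> nat \<Rightarrow> ('a \<Rightarrow> nat) set" where
  "monomials_with_support T i = {m. {x. 0 < m x} = T \<and> sum m T = i}"

lemma size_eq_sum_count:
  assumes "finite T" and "set_mset M \<subseteq> T"
  shows "size M = (\<Sum>x\<in>T. count M x)"
proof -
  have "size M = (\<Sum>x\<in>set_mset M. count M x)"
    by (simp add: size_multiset_overloaded_eq)
  also have "\<dots> = (\<Sum>x\<in>T. count M x)"
    using assms by (intro sum.mono_neutral_left) (auto simp: count_eq_zero_iff)
  finally show ?thesis .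
qed

text \<open>A monomial with support T is x^T times an arbitrary monomial in the variables of T.\<close>

lemma monomials_with_support_eq_image:
  assumes "finite T" and "card T \<le> i"
  shows "monomials_with_support T i
       = (\<lambda>M x. if x \<in> T then Suc (count M x) else 0) ` multisets_of_size T (i - card T)"
proof (intro equalityI subsetI)
  fix m assume "m \<in> monomials_with_support T i"
  then have supp: "{x. 0 < m x} = T" and deg: "sum m T = i"
    unfolding monomials_with_support_def by auto
  define M where "M = Abs_multiset (\<lambda>x. m x - 1)"
  have "finite {x. 0 < m x - 1}"
    by (rule finite_subset[OF _ assms(1)]) (use supp in auto)
  then have count_M: "count M = (\<lambda>x. m x - 1)"
    unfolding M_def by (rule count_Abs_multiset)
  have "set_mset M \<subseteq> T" using supp by (auto simp: set_mset_def count_M)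
  moreover have "size M = i - card T"
  proof -
    have "sum m T = (\<Sum>x\<in>T. count M x + 1)"
      using supp by (intro sum.cong) (auto simp: count_M)
    also have "\<dots> = size M + card T"
      using size_eq_sum_count[OF assms(1) \<open>set_mset M \<subseteq> T\<close>] by (simp add: sum_Suc)
    finally show ?thesis using deg by simp
  qed
  moreover have "m = (\<lambda>x. if x \<in> T then Suc (count M x) else 0)"
    using supp by (auto simp: count_M fun_eq_iff)
  ultimately show "m \<in> (\<lambda>M x. if x \<in> T then Suc (count M x) else 0) ` multisets_of_size T (i - card T)"
    unfolding multisets_of_size_def by blast
next
  fix m assume "m \<in> (\<lambda>M x. if x \<in> T then Suc (count M x) else 0) ` multisets_of_size T (i - card T)"
  then obtain M where M: "set_mset M \<subseteq> T" "size M = i - card T"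
    and m: "m = (\<lambda>x. if x \<in> T then Suc (count M x) else 0)"
    unfolding multisets_of_size_def by blast
  have "sum m T = (\<Sum>x\<in>T. count M x + 1)"
    by (intro sum.cong) (auto simp: m)
  also have "\<dots> = size M + card T"
    using size_eq_sum_count[OF assms(1) M(1)] by (simp add: sum_Suc)
  finally have "sum m T = i" using M(2) assms(2) by simp
  moreover have "{x. 0 < m x} = T" by (auto simp: m)
  ultimately show "m \<in> monomials_with_support T i"
    unfolding monomials_with_support_def by blast
qed

lemma monomials_with_support_empty:
  assumes "i < card T"
  shows "monomials_with_support T i = {}"
proof (rule ccontr)
  assume "monomials_with_support T i \<noteq> {}"
  then obtain m where supp: "{x. 0 < m x} = T" and deg: "sum m T = i"
    unfolding monomials_with_support_def by blast
  have "(\<Sum>x\<in>T. 1) \<le> sum m T" using supp by (intro sum_mono) auto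
  then show False using deg assms by simp
qed

lemma finite_monomials_with_support:
  assumes "finite T"
  shows "finite (monomials_with_support T i)"
proof (cases "card T \<le> i")
  case True
  then show ?thesis
    using assms by (simp add: monomials_with_support_eq_image finite_multisets_of_size)
qed (simp add: monomials_with_support_empty)

lemma card_monomials_with_support:
  assumes "finite T"
  shows "card (monomials_with_support T i)
       = (if i < card T then 0 else (i - 1) choose (i - card T))"
proof (cases "i < card T")
  case False
  let ?f = "\<lambda>M x. if x \<in> T then Suc (count M x) else 0"
  have "inj_on ?f (multisets_of_size T (i - card T))"
  proof (rule inj_onI, rule multiset_eqI)
    fix M N x
    assume "M \<in> multisets_of_size T (i - card T)" "N \<in> multisets_of_size T (i - card T)"
      and eq: "?f M = ?f N"
    show "count M x = count N x"
    proof (cases "x \<in> T")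
      case True
      then show ?thesis using fun_cong[OF eq, of x] by simp
    next
      case False
      then show ?thesis using \<open>M \<in> _\<close> \<open>N \<in> _\<close>
        unfolding multisets_of_size_def by (metis count_eq_zero_iff mem_Collect_eq subsetD)
    qed
  qed
  then have "card (monomials_with_support T i) = card (multisets_of_size T (i - card T))"
    unfolding monomials_with_support_eq_image[OF assms] using False
    by (simp add: monomials_with_support_eq_image[OF assms] card_image)
  also have "\<dots> = (card T + (i - card T) - 1) choose (i - card T)"
    by (rule card_multisets_of_size[OF assms])
  finally show ?thesis using False by simp
qed (simp add: monomials_with_support_empty)

definition neg_binomial_fps :: "nat \<Rightarrow> int fps" where
  "neg_binomial_fps k = Abs_fps (\<lambda>n. int ((k + n - 1) choose n))"

lemma neg_binomial_fps_Suc: "neg_binomial_fps (Suc k) * (1 - fps_X) = neg_binomial_fps k"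
proof (rule fps_ext)
  fix n
  show "(neg_binomial_fps (Suc k) * (1 - fps_X)) $ n = neg_binomial_fps k $ n"
  proof (cases n)
    case (Suc n')
    have "(neg_binomial_fps (Suc k) * (1 - fps_X)) $ n
        = int ((k + n) choose n) - int ((k + n') choose n')"
      using Suc by (simp add: algebra_simps neg_binomial_fps_def flip: fps_mult_fps_X_commute)
    also have "\<dots> = int ((k + n - 1) choose n)"
      using Suc by (simp add: binomial_Suc_Suc)
    finally show ?thesis by (simp add: neg_binomial_fps_def)
  qed (simp add: neg_binomial_fps_def algebra_simps)
qed

lemma neg_binomial_fps_inverse: "neg_binomial_fps k * (1 - fps_X) ^ k = 1"
proof (induction k)
  case 0
  show ?case by (intro fps_ext) (simp add: neg_binomial_fps_def)
next
  case (Suc k)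
  have "neg_binomial_fps (Suc k) * (1 - fps_X) ^ Suc k
      = (neg_binomial_fps (Suc k) * (1 - fps_X)) * (1 - fps_X) ^ k"
    by (simp add: algebra_simps)
  then show ?case using Suc neg_binomial_fps_Suc by simp
qed

lemma fps_monomials_with_support:
  assumes "finite T"
  shows "Abs_fps (\<lambda>i. int (card (monomials_with_support T i)))
       = fps_X ^ card T * neg_binomial_fps (card T)"
  by (rule fps_ext)
    (simp add: fps_X_power_mult_nth card_monomials_with_support[OF assms] neg_binomial_fps_def)

lemma edge_free_iff_independent_support:
  assumes "simple_graph Vs E"
  shows "(\<forall>e\<in>E. \<not> (\<forall>x\<in>e. 0 < m x)) \<longleftrightarrow> independent E {x. 0 < m x}"
proof
  assume "\<forall>e\<in>E. \<not> (\<forall>x\<in>e. 0 < m x)"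
  then show "independent E {x. 0 < m x}"
    unfolding independent_def adj_def by fastforce
next
  assume indep: "independent E {x. 0 < m x}"
  show "\<forall>e\<in>E. \<not> (\<forall>x\<in>e. 0 < m x)"
  proof (intro ballI notI)
    fix e assume "e \<in> E" and pos: "\<forall>x\<in>e. 0 < m x"
    then obtain x y where "e = {x, y}"
      using assms card_2_iff unfolding simple_graph_def by metis
    then show False
      using indep pos \<open>e \<in> E\<close> unfolding independent_def adj_def by auto
  qed
qed

lemma standard_monomial_iff:
  assumes "simple_graph Vs E"
  shows "((\<forall>x. x \<notin> Vs \<longrightarrow> m x = 0) \<and> (\<Sum>x\<in>Vs. m x) = i \<and> (\<forall>e\<in>E. \<not> (\<forall>x\<in>e. 0 < m x)))
     \<longleftrightarrow> (\<exists>T\<in>independent_sets Vs E. m \<in> monomials_with_support T i)"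
proof -
  have "finite Vs" using assms unfolding simple_graph_def by simp
  have "sum m {x. 0 < m x} = sum m Vs" if "{x. 0 < m x} \<subseteq> Vs"
    using \<open>finite Vs\<close> that by (intro sum.mono_neutral_left) auto
  moreover have "(\<forall>x. x \<notin> Vs \<longrightarrow> m x = 0) \<longleftrightarrow> {x. 0 < m x} \<subseteq> Vs"
    by auto
  moreover have "(\<exists>T\<in>independent_sets Vs E. m \<in> monomials_with_support T i)
      \<longleftrightarrow> {x. 0 < m x} \<in> independent_sets Vs E \<and> sum m {x. 0 < m x} = i"
    unfolding monomials_with_support_def by auto
  ultimately show ?thesis
    unfolding independent_sets_def edge_free_iff_independent_support[OF assms] by auto
qed

lemma hilbert_fun_eq_sum:
  assumes "simple_graph Vs E"
  shows "hilbert_fun Vs E i = (\<Sum>T\<in>independent_sets Vs E. card (monomials_with_support T i))"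
proof -
  have "finite Vs" using assms unfolding simple_graph_def by simp
  have "hilbert_fun Vs E i = card (\<Union>T\<in>independent_sets Vs E. monomials_with_support T i)"
    unfolding hilbert_fun_def
    by (intro arg_cong[where f = card] set_eqI)
      (simp only: mem_Collect_eq UN_iff standard_monomial_iff[OF assms])
  also have "\<dots> = (\<Sum>T\<in>independent_sets Vs E. card (monomials_with_support T i))"
  proof (rule card_UN_disjoint)
    show "finite (independent_sets Vs E)" using finite_independent_sets[OF \<open>finite Vs\<close>] .
    show "\<forall>T\<in>independent_sets Vs E. finite (monomials_with_support T i)"
      using \<open>finite Vs\<close> finite_monomials_with_support finite_subset
      unfolding independent_sets_def by blast
    show "\<forall>T\<in>independent_sets Vs E. \<forall>T'\<in>independent_sets Vs E. T \<noteq> T' \<longrightarrow>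
        monomials_with_support T i \<inter> monomials_with_support T' i = {}"
      unfolding monomials_with_support_def by blast
  qed
  finally show ?thesis .
qed

lemma hilbert_series_eq_sum:
  assumes "simple_graph Vs E"
  shows "hilbert_series Vs E
       = (\<Sum>T\<in>independent_sets Vs E. fps_X ^ card T * neg_binomial_fps (card T))"
proof (rule fps_ext)
  fix n
  have "finite T" if "T \<in> independent_sets Vs E" for T
    using that assms finite_subset unfolding simple_graph_def independent_sets_def by blast
  then show "hilbert_series Vs E $ n
      = (\<Sum>T\<in>independent_sets Vs E. fps_X ^ card T * neg_binomial_fps (card T)) $ n"
    by (simp add: hilbert_series_def hilbert_fun_eq_sum[OF assms] fps_sum_nth
        flip: fps_monomials_with_support)
qed

definition independence_h_poly :: "'a set \<Rightarrow> 'a set set \<Rightarrow> int poly" where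
  "independence_h_poly Vs E =
     (\<Sum>T\<in>independent_sets Vs E. monom 1 (card T) * [:1, -1:] ^ (alpha Vs E - card T))"

lemma fps_of_poly_one_minus_X: "fps_of_poly [:1, -1:] = (1 - fps_X :: int fps)"
  by (simp add: fps_of_poly_pCons fps_const_neg)

lemma fps_of_independence_h_poly:
  assumes "simple_graph Vs E"
  shows "fps_of_poly (independence_h_poly Vs E) = hilbert_series Vs E * (1 - fps_X) ^ alpha Vs E"
proof -
  have "finite Vs" using assms unfolding simple_graph_def by simp
  have "fps_X ^ card T * neg_binomial_fps (card T) * (1 - fps_X) ^ alpha Vs E
      = fps_X ^ card T * (1 - fps_X) ^ (alpha Vs E - card T)"
    if "T \<in> independent_sets Vs E" for T
  proof -
    have "(1 - fps_X :: int fps) ^ alpha Vs E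
        = (1 - fps_X) ^ card T * (1 - fps_X) ^ (alpha Vs E - card T)"
      using card_le_alpha[OF \<open>finite Vs\<close> that] by (simp flip: power_add)
    then have "fps_X ^ card T * neg_binomial_fps (card T) * (1 - fps_X) ^ alpha Vs E
        = fps_X ^ card T * (neg_binomial_fps (card T) * (1 - fps_X) ^ card T)
          * (1 - fps_X) ^ (alpha Vs E - card T)"
      by (simp only: mult.assoc)
    then show ?thesis by (simp add: neg_binomial_fps_inverse)
  qed
  then have "hilbert_series Vs E * (1 - fps_X) ^ alpha Vs E
      = (\<Sum>T\<in>independent_sets Vs E. fps_X ^ card T * (1 - fps_X) ^ (alpha Vs E - card T))"
    unfolding hilbert_series_eq_sum[OF assms] sum_distrib_right by (rule sum.cong[OF refl])
  then show ?thesis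
    by (simp add: independence_h_poly_def fps_of_poly_sum fps_of_poly_mult fps_of_poly_power
        fps_of_poly_one_minus_X fps_of_poly_monom')
qed

lemma poly_independence_h_poly_one:
  assumes "finite Vs"
  shows "poly (independence_h_poly Vs E) 1
       = int (card {T\<in>independent_sets Vs E. card T = alpha Vs E})"
proof -
  have "poly (independence_h_poly Vs E) 1 = (\<Sum>T\<in>independent_sets Vs E. (0::int) ^ (alpha Vs E - card T))"
    by (simp add: independence_h_poly_def poly_sum poly_monom)
  also have "\<dots> = (\<Sum>T\<in>independent_sets Vs E. if card T = alpha Vs E then 1 else 0)"
  proof (intro sum.cong refl)
    fix T assume "T \<in> independent_sets Vs E"
    then have "card T \<le> alpha Vs E" by (rule card_le_alpha[OF assms])
    then show "(0::int) ^ (alpha Vs E - card T) = (if card T = alpha Vs E then 1 else 0)"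
      by auto
  qed
  also have "\<dots> = int (card {T\<in>independent_sets Vs E. card T = alpha Vs E})"
    using finite_independent_sets[OF assms] by (simp add: sum.If_cases Int_def)
  finally show ?thesis .
qed

lemma poly_independence_h_poly_one_nonzero:
  assumes "finite Vs"
  shows "poly (independence_h_poly Vs E) 1 \<noteq> 0"
  using alpha_attained[OF assms] finite_independent_sets[OF assms]
  by (auto simp: poly_independence_h_poly_one[OF assms] card_gt_0_iff)

lemma h_poly_eq_independence_h_poly:
  assumes "simple_graph Vs E"
  shows "h_poly Vs E = independence_h_poly Vs E"
  unfolding h_poly_def
proof (rule the_equality)
  have "finite Vs" using assms unfolding simple_graph_def by simp
  let ?h = "independence_h_poly Vs E" and ?a = "alpha Vs E"
  note h_fps = fps_of_independence_h_poly[OF assms]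
    and h_one = poly_independence_h_poly_one_nonzero[OF \<open>finite Vs\<close>, of E]
  show "\<exists>d. fps_of_poly ?h = hilbert_series Vs E * (1 - fps_X) ^ d \<and> poly ?h 1 \<noteq> 0"
    using h_fps h_one by blast
  fix h assume "\<exists>d. fps_of_poly h = hilbert_series Vs E * (1 - fps_X) ^ d \<and> poly h 1 \<noteq> 0"
  then obtain d where h_fps': "fps_of_poly h = hilbert_series Vs E * (1 - fps_X) ^ d"
    and "poly h 1 \<noteq> 0" by blast
  show "h = ?h"
  proof (cases "d \<le> ?a")
    case True
    then have "fps_of_poly ?h = fps_of_poly (h * [:1, -1:] ^ (?a - d))"
      by (simp add: h_fps h_fps' fps_of_poly_mult fps_of_poly_power fps_of_poly_one_minus_X
          mult.assoc flip: power_add)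
    then have eq: "?h = h * [:1, -1:] ^ (?a - d)" by (simp add: fps_of_poly_eq_iff)
    then have "poly ?h 1 = poly h 1 * 0 ^ (?a - d)" by simp
    then have "?a - d = 0" using h_one by (cases "?a - d") auto
    with eq show ?thesis by simp
  next
    case False
    then have "fps_of_poly h = fps_of_poly (?h * [:1, -1:] ^ (d - ?a))"
      by (simp add: h_fps h_fps' fps_of_poly_mult fps_of_poly_power fps_of_poly_one_minus_X
          mult.assoc flip: power_add)
    then have "h = ?h * [:1, -1:] ^ (d - ?a)" by (simp add: fps_of_poly_eq_iff)
    then have "poly h 1 = 0" using False by simp
    with \<open>poly h 1 \<noteq> 0\<close> show ?thesis by contradiction
  qed
qed

lemma degree_independence_h_poly_le:
  assumes "finite Vs"
  shows "degree (independence_h_poly Vs E) \<le> alpha Vs E"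
  unfolding independence_h_poly_def
proof (rule degree_sum_le[OF finite_independent_sets[OF assms]])
  fix T assume "T \<in> independent_sets Vs E"
  have "degree (monom (1::int) (card T) * [:1, -1:] ^ (alpha Vs E - card T))
      \<le> card T + (alpha Vs E - card T)"
    using degree_mult_le[of "monom (1::int) (card T)"] degree_power_le[of "[:1, -1::int:]"]
      degree_monom_le[of "1::int" "card T"] by (fastforce intro: order_trans)
  then show "degree (monom (1::int) (card T) * [:1, -1:] ^ (alpha Vs E - card T)) \<le> alpha Vs E"
    using card_le_alpha[OF assms \<open>T \<in> _\<close>] by simp
qed

lemma coeff_independence_h_poly_alpha:
  assumes "finite Vs"
  shows "coeff (independence_h_poly Vs E) (alpha Vs E)
       = (-1) ^ alpha Vs E * (\<Sum>T\<in>independent_sets Vs E. (-1) ^ card T)"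
proof -
  have "coeff (monom 1 (card T) * [:1, -1:] ^ (alpha Vs E - card T)) (alpha Vs E)
      = (-1) ^ alpha Vs E * (-1::int) ^ card T" if "T \<in> independent_sets Vs E" for T
  proof -
    have "card T \<le> alpha Vs E" using card_le_alpha[OF assms that] .
    moreover have "coeff ([:1, -1::int:] ^ n) n = (-1) ^ n" for n
      using lead_coeff_power[of "[:1, -1::int:]" n] degree_power_eq[of "[:1, -1::int:]" n] by simp
    ultimately show ?thesis
      by (simp add: coeff_monom_mult neg_one_power_add_eq_neg_one_power_diff flip: power_add)
  qed
  then show ?thesis
    by (simp add: independence_h_poly_def coeff_sum sum_distrib_left)
qed

text \<open>The alternating sum is, up to sign, the reduced Euler characteristic of the independence
  complex of G.\<close>

lemma degree_h_poly_eq_alpha_iff: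
  assumes "simple_graph Vs E"
  shows "degree (h_poly Vs E) = alpha Vs E
     \<longleftrightarrow> (\<Sum>T\<in>independent_sets Vs E. (-1::int) ^ card T) \<noteq> 0"
proof -
  have "finite Vs" using assms unfolding simple_graph_def by simp
  let ?h = "independence_h_poly Vs E"
  have "?h \<noteq> 0" using poly_independence_h_poly_one_nonzero[OF \<open>finite Vs\<close>, of E] by auto
  then have "degree ?h = alpha Vs E \<longleftrightarrow> coeff ?h (alpha Vs E) \<noteq> 0"
    using degree_independence_h_poly_le[OF \<open>finite Vs\<close>] le_degree le_antisym
    by (metis leading_coeff_0_iff)
  then show ?thesis
    by (simp add: h_poly_eq_independence_h_poly[OF assms] coeff_independence_h_poly_alpha[OF \<open>finite Vs\<close>])
qed

section \<open>Bipartite graphs with leaves\<close>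

lemma bipartition_commute: "bipartition Vs E U V \<Longrightarrow> bipartition Vs E V U"
  unfolding bipartition_def by (metis inf_commute sup_commute insert_commute)

lemma bipartition_adj:
  assumes "bipartition Vs E U V" and "adj E x y" and "x \<in> U"
  shows "y \<in> V"
  using assms unfolding bipartition_def adj_def by (metis disjoint_iff doubleton_eq_iff)

lemma independent_bipartition_side:
  assumes "bipartition Vs E U V"
  shows "independent E U"
  using bipartition_adj[OF assms] assms unfolding independent_def bipartition_def by blast

lemma nbhd_bipartition_side:
  assumes "bipartition Vs E U V" and "S \<subseteq> U"
  shows "nbhd E S \<subseteq> V"
  using bipartition_adj[OF assms(1)] assms(2) unfolding nbhd_def by blast

lemma connected_bipartition_nbhd:
  assumes "connected_graph Vs E" and "bipartition Vs E U V"
  shows "U \<subseteq> nbhd E V"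
proof
  fix u assume "u \<in> U"
  obtain v where "v \<in> V" "u \<noteq> v"
    using assms(2) \<open>u \<in> U\<close> unfolding bipartition_def by blast
  moreover have "u \<in> Vs" "v \<in> Vs"
    using assms(2) \<open>u \<in> U\<close> \<open>v \<in> V\<close> unfolding bipartition_def by auto
  ultimately obtain y where "adj E u y"
    using assms(1) unfolding connected_graph_def by (metis converse_rtranclpE)
  then show "u \<in> nbhd E V"
    using bipartition_adj[OF assms(2) _ \<open>u \<in> U\<close>] unfolding nbhd_def by (blast intro: adj_sym)
qed

lemma nbhd_leaves_eq:
  assumes "bipartition Vs E U V" and "L \<subseteq> U" and "\<forall>u\<in>L. leaf Vs E u"
    and "\<forall>v\<in>P. \<exists>u\<in>L. adj E v u" and "P = {v\<in>V. \<exists>x. leaf Vs E x \<and> adj E v x}"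
  shows "nbhd E L = P"
proof (intro equalityI subsetI)
  fix y assume "y \<in> nbhd E L"
  then obtain u where "u \<in> L" "adj E u y" unfolding nbhd_def by blast
  moreover have "adj E y u" using \<open>adj E u y\<close> by (rule adj_sym)
  ultimately show "y \<in> P"
    using assms(2,3,5) bipartition_adj[OF assms(1)] by blast
next
  fix v assume "v \<in> P"
  then show "v \<in> nbhd E L" using assms(4) unfolding nbhd_def by (blast intro: adj_sym)
qed

lemma subsets_covering_eq:
  assumes "bipartition Vs E U V" and "P \<subseteq> V" and "L \<subseteq> nbhd E P" and "V - P \<noteq> {}"
  shows "{S. S \<subseteq> U - nbhd E P \<and> V - P \<subseteq> nbhd E S} = {S. S \<subseteq> U - L \<and> S \<noteq> {} \<and> nbhd E S = V - P}"
proof (intro equalityI subsetI)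
  fix S assume "S \<in> {S. S \<subseteq> U - nbhd E P \<and> V - P \<subseteq> nbhd E S}"
  then have S: "S \<subseteq> U - nbhd E P" "V - P \<subseteq> nbhd E S" by auto
  have "nbhd E S \<subseteq> V" using S(1) by (intro nbhd_bipartition_side[OF assms(1)]) auto
  moreover have "nbhd E S \<inter> P = {}"
    using S(1) unfolding nbhd_def by (blast dest: adj_sym)
  moreover have "S \<noteq> {}" using S(2) assms(4) unfolding nbhd_def by auto
  ultimately show "S \<in> {S. S \<subseteq> U - L \<and> S \<noteq> {} \<and> nbhd E S = V - P}"
    using S assms(3) by blast
next
  fix S assume "S \<in> {S. S \<subseteq> U - L \<and> S \<noteq> {} \<and> nbhd E S = V - P}"
  then have S: "S \<subseteq> U" "nbhd E S = V - P" by auto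
  have "S \<inter> nbhd E P = {}"
    using S(2) unfolding nbhd_def by (blast dest: adj_sym)
  then show "S \<in> {S. S \<subseteq> U - nbhd E P \<and> V - P \<subseteq> nbhd E S}"
    using S by blast
qed

lemma sum_independent_sets_bipartite_leaves:
  assumes "finite Vs" and bip: "bipartition Vs E U V" and "L \<subseteq> U" and "\<forall>u\<in>L. leaf Vs E u"
  shows "(\<Sum>T\<in>independent_sets Vs E. (-1::int) ^ card T)
       = (-1) ^ card (nbhd E L)
         * (\<Sum>S\<in>{S. S \<subseteq> U - nbhd E (nbhd E L) \<and> V - nbhd E L \<subseteq> nbhd E S}. (-1) ^ card S)"
proof -
  let ?P = "nbhd E L"
  have Vs: "Vs = U \<union> V" and "U \<inter> V = {}" using bip unfolding bipartition_def by auto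
  have "finite U" "finite V" using \<open>finite Vs\<close> Vs by auto
  have "?P \<subseteq> V" using bip \<open>L \<subseteq> U\<close> by (rule nbhd_bipartition_side)
  have indep_U: "independent E S" if "S \<subseteq> U" for S
    using that independent_bipartition_side[OF bip] by (rule independent_subset)
  have indep_V: "independent E S" if "S \<subseteq> V" for S
    using that independent_bipartition_side[OF bipartition_commute[OF bip]] by (rule independent_subset)
  have "(\<Sum>T\<in>independent_sets Vs E. (-1::int) ^ card T)
      = (-1) ^ card ?P * (\<Sum>T\<in>independent_sets (Vs - ?P - nbhd E ?P) E. (-1) ^ card T)"
    using \<open>L \<subseteq> U\<close> \<open>?P \<subseteq> V\<close> Vs
    by (intro sum_independent_sets_remove_leaves \<open>finite Vs\<close> assms(4) indep_U indep_V) auto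
  also have "Vs - ?P - nbhd E ?P = (U - nbhd E ?P) \<union> (V - ?P)"
    using nbhd_bipartition_side[OF bipartition_commute[OF bip] \<open>?P \<subseteq> V\<close>] \<open>U \<inter> V = {}\<close> \<open>?P \<subseteq> V\<close>
    unfolding Vs by blast
  also have "(\<Sum>T\<in>independent_sets ((U - nbhd E ?P) \<union> (V - ?P)) E. (-1::int) ^ card T)
      = (\<Sum>S\<in>{S. S \<subseteq> U - nbhd E ?P \<and> V - ?P \<subseteq> nbhd E S}. (-1) ^ card S)"
    using \<open>finite U\<close> \<open>finite V\<close>
    by (intro sum_independent_sets_two_sides indep_U indep_V) auto
  finally show ?thesis .
qed

theorem theorem5p9:
  fixes Vs U V VW UL :: "'a set" and E :: "'a set set"
  assumes G: "simple_graph Vs E" and conn: "connected_graph Vs E"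
    and bip: "bipartition Vs E U V" and UV: "card U \<ge> card V"
    and VW_def: "VW = {v\<in>V. \<exists>x. leaf Vs E x \<and> adj E v x}"
    and UL_sub: "UL \<subseteq> U" and UL_leaves: "\<forall>u\<in>UL. leaf Vs E u"
    and UL_match: "\<forall>v\<in>VW. \<exists>!u. u \<in> UL \<and> adj E v u"
    and UL_card: "card UL = card VW"
  defines "X \<equiv> {S. S \<subseteq> U - UL \<and> S \<noteq> {} \<and> nbhd E S = V - VW}"
  defines "q \<equiv> int (card {S\<in>X. even (card S)}) - int (card {S\<in>X. odd (card S)})"
  shows "(V - VW = {} \<longrightarrow> degree (h_poly Vs E) = alpha Vs E) \<and>
         (V - VW \<noteq> {} \<longrightarrow> (degree (h_poly Vs E) = alpha Vs E \<longleftrightarrow> q \<noteq> 0))"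
proof -
  have "finite Vs" using G unfolding simple_graph_def by simp
  have "VW \<subseteq> V" using VW_def by blast
  have "\<forall>v\<in>VW. \<exists>u\<in>UL. adj E v u" using UL_match by blast
  then have stems: "nbhd E UL = VW"
    by (rule nbhd_leaves_eq[OF bip UL_sub UL_leaves _ VW_def])
  let ?C = "{S. S \<subseteq> U - nbhd E VW \<and> V - VW \<subseteq> nbhd E S}"
  have degree_iff: "degree (h_poly Vs E) = alpha Vs E \<longleftrightarrow> (\<Sum>S\<in>?C. (-1::int) ^ card S) \<noteq> 0"
    using degree_h_poly_eq_alpha_iff[OF G]
      sum_independent_sets_bipartite_leaves[OF \<open>finite Vs\<close> bip UL_sub UL_leaves]
    unfolding stems by simp
  show ?thesis
  proof (cases "V - VW = {}")
    case True
    then have "VW = V" using \<open>VW \<subseteq> V\<close> by blast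
    then have "U - nbhd E VW = {}" using connected_bipartition_nbhd[OF conn bip] by blast
    then have "?C = {{}}" using True by auto
    then have "degree (h_poly Vs E) = alpha Vs E" using degree_iff by simp
    with True show ?thesis by simp
  next
    case False
    have "UL \<subseteq> nbhd E VW"
      using leaves_subset_nbhd_iff[OF UL_leaves, of "nbhd E UL"] stems by simp
    then have "?C = X"
      unfolding X_def by (rule subsets_covering_eq[OF bip \<open>VW \<subseteq> V\<close> _ False])
    moreover have "finite U" using G bip unfolding simple_graph_def bipartition_def by auto
    then have "finite X" unfolding X_def by simp
    ultimately have "degree (h_poly Vs E) = alpha Vs E \<longleftrightarrow> q \<noteq> 0"
      unfolding q_def using degree_iff sum_neg_one_power_card[OF \<open>finite X\<close>] by simp
    with False show ?thesis by simp
  qed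
qed

end
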